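(* Let $K$ be an algebraically closed field, let $r\ge 3$, and let $f\in K[x_{ij}\mid i,j\in[m]]$ be a polynomial in the entries of the generic $m\times m$ matrix $x=(x_{ij})$ with the following properties: (1) $f$ vanishes on all matrices in $K^{m\times m}$ of rank $r$; (2) for every row index $i\in[m]$, $f$ admits an expansion $f=x_{i,j_1}f_1+\cdots+x_{i,j_{r+1}}f_{r+1}$ with $j_1<\cdots<j_{r+1}$, where each $f_l$ is a polynomial in the entries of the $([m]\setminus\{i\})\times([m]\setminus\{j_l\})$-submatrix $z$ of $x$ of the form: a scalar times a monomial times some $r\times r$-minor of $z$; (3) for every column index $j\in[m]$, $f$ admits an expansion $f=x_{i_1,j}g_1+\cdots+x_{i_{r+1},j}g_{r+1}$ with $i_1<\cdots<i_{r+1}$, where each $g_l$ is a polynomial in the entries of the $([m]\setminus\{i_l\})\times([m]\setminus\{j\})$-submatrix $z'$ of $x$ of the form: a scalar times a monomial times some $r\times r$-minor of $z'$. Then $m=r+1$ and $f$ is a scalar multiple of the $(r+1)\times(r+1)$-determinant of $x$. *)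

theory Defs
  imports "HOL-Library.Poly_Mapping" "HOL-Combinatorics.Permutations"
    "HOL-Computational_Algebra.Polynomial" "Jordan_Normal_Form.DL_Rank"
begin

text \<open>Multivariate polynomials in the variables x_ij (indexed by pairs of naturals):
  a monomial is a finitely supported exponent map, a polynomial is a
  finitely supported coefficient map on monomials (convolution product from Poly_Mapping).\<close>

type_synonym 'a mpoly = "((nat \<times> nat) \<Rightarrow>\<^sub>0 nat) \<Rightarrow>\<^sub>0 'a"

definition Var :: "nat \<Rightarrow> nat \<Rightarrow> 'a::comm_ring_1 mpoly" where
  "Var i j = Poly_Mapping.single (Poly_Mapping.single (i, j) 1) 1"

definition mterm :: "'a::comm_ring_1 \<Rightarrow> ((nat \<times> nat) \<Rightarrow>\<^sub>0 nat) \<Rightarrow> 'a mpoly" where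
  "mterm c e = Poly_Mapping.single e c"

definition const_mpoly :: "'a::comm_ring_1 \<Rightarrow> 'a mpoly" where
  "const_mpoly c = Poly_Mapping.single 0 c"

definition mvars :: "'a::zero mpoly \<Rightarrow> (nat \<times> nat) set" where
  "mvars p = (\<Union>e\<in>Poly_Mapping.keys p. Poly_Mapping.keys e)"

text \<open>the minor of the generic matrix with row set R and column set C (|R| = |C|),
  rows and columns taken in increasing order\<close>
definition minor_poly :: "nat set \<Rightarrow> nat set \<Rightarrow> 'a::comm_ring_1 mpoly" where
  "minor_poly R C =
     (let k = card R; rs = sorted_list_of_set R; cs = sorted_list_of_set C in
      \<Sum>p | p permutes {..<k}. of_int (sign p) * (\<Prod>l<k. Var (rs ! l) (cs ! (p l))))"

definition eval_mpoly :: "'a::comm_ring_1 mpoly \<Rightarrow> (nat \<Rightarrow> nat \<Rightarrow> 'a) \<Rightarrow> 'a" where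
  "eval_mpoly p A = (\<Sum>e\<in>Poly_Mapping.keys p. Poly_Mapping.lookup p e * (\<Prod>v\<in>Poly_Mapping.keys e. A (fst v) (snd v) ^ Poly_Mapping.lookup e v))"

definition scalar_mono_minor :: "nat set \<Rightarrow> nat set \<Rightarrow> nat \<Rightarrow> 'a::comm_ring_1 mpoly \<Rightarrow> bool" where
  "scalar_mono_minor Rz Cz r g \<longleftrightarrow>
     (\<exists>c e R C. Poly_Mapping.keys e \<subseteq> Rz \<times> Cz \<and> R \<subseteq> Rz \<and> C \<subseteq> Cz \<and> card R = r \<and> card C = r \<and>
        g = mterm c e * minor_poly R C)"

end

theory Submission
  imports Defs
begin

(* Expanding f along a row i shows that each monomial of f contains exactly one variable
   of row i, with exponent 1; the column expansions give the same for columns, so every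
   monomial of f is a permutation monomial x_{0 s(0)} ... x_{m-1 s(m-1)}.  Fix one, s0, and
   a row i.  The term of the row expansion that contains it is c x^e M with M an r x r minor
   on a row set R, so every monomial of f agreeing with s0 in row i agrees with s0 outside
   R and i, while swapping two rows of R only changes the sign of the coefficient.
   Comparing these blocks R for different rows is impossible once m >= r + 2, so m = r + 1
   and every block consists of all rows but i.  Then the coefficient of s is alternating
   under transpositions, hence equal to sign s times a constant, and f is a multiple of the
   determinant. *)

abbreviation lookup :: "('b \<Rightarrow>\<^sub>0 'c::zero) \<Rightarrow> 'b \<Rightarrow> 'c" where
  "lookup \<equiv> Poly_Mapping.lookup"

abbreviation keys :: "('b \<Rightarrow>\<^sub>0 'c::zero) \<Rightarrow> 'b set" where
  "keys \<equiv> Poly_Mapping.keys"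

abbreviation single :: "'b \<Rightarrow> 'c::zero \<Rightarrow> 'b \<Rightarrow>\<^sub>0 'c" where
  "single \<equiv> Poly_Mapping.single"

lemma lookup_single_mult:
  fixes k x :: "'b::cancel_comm_monoid_add" and c :: "'c::comm_semiring_1"
  shows "lookup (single k c * g) (k + x) = c * lookup g x"
proof -
  have "lookup (single k c * g) (k + x) =
      (\<Sum>l. (c * Sum_any (\<lambda>q. lookup g q when k + x = l + q)) when k = l)"
    by (simp add: lookup_mult lookup_single when_mult)
  also have "\<dots> = c * Sum_any (\<lambda>q. lookup g q when k + x = k + q)"
    by simp
  also have "Sum_any (\<lambda>q. lookup g q when k + x = k + q) = Sum_any (\<lambda>q. lookup g q when q = x)"
    by (rule Sum_any.cong) (auto simp: when_def)
  finally show ?thesis by simp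
qed

lemma keys_single_mult:
  fixes k :: "'b::cancel_comm_monoid_add" and c :: "'c::comm_semiring_1"
  assumes "\<mu> \<in> keys (single k c * g)"
  obtains \<nu> where "\<nu> \<in> keys g" "\<mu> = k + \<nu>"
  using keys_mult[of "single k c" g] assms by (cases "c = 0") auto

lemma keys_add_nat: "keys (a + b :: 'b \<Rightarrow>\<^sub>0 nat) = keys a \<union> keys b"
  by (auto simp: in_keys_iff lookup_add)

lemma lookup_Var_mult: "lookup (Var i j * g) (single (i, j) 1 + \<nu>) = lookup g \<nu>"
  unfolding Var_def by (simp add: lookup_single_mult)

lemma lookup_Var_mult_eq_0:
  assumes "lookup \<mu> (i, j) = 0"
  shows "lookup (Var i j * g) \<mu> = 0"
proof (rule ccontr)
  assume "lookup (Var i j * g) \<mu> \<noteq> 0"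
  then have "\<mu> \<in> keys (single (single (i, j) 1) 1 * g)" by (simp add: Var_def in_keys_iff)
  then obtain \<nu> where "\<mu> = single (i, j) 1 + \<nu>" by (rule keys_single_mult)
  then show False using assms by (simp add: lookup_add)
qed

lemma keys_sum_Var_mult:
  assumes "\<mu> \<in> keys (\<Sum>l\<in>L. Var (a l) (b l) * g l)"
  obtains l \<nu> where "l \<in> L" "\<nu> \<in> keys (g l)" "\<mu> = single (a l, b l) 1 + \<nu>"
proof -
  obtain l where l: "l \<in> L" "\<mu> \<in> keys (single (single (a l, b l) 1) 1 * g l)"
    using keys_sum assms by (force simp: Var_def)
  obtain \<nu> where "\<nu> \<in> keys (g l)" "\<mu> = single (a l, b l) 1 + \<nu>"
    using l(2) by (rule keys_single_mult)
  with l(1) show thesis by (rule that)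
qed

lemma keys_subset_mvars: "\<nu> \<in> keys p \<Longrightarrow> keys \<nu> \<subseteq> mvars p"
  by (auto simp: mvars_def)

lemma mvars_mult: "mvars (p * q) \<subseteq> mvars p \<union> mvars q"
  unfolding mvars_def using keys_mult[of p q] by (fastforce simp: keys_add_nat)

lemma mvars_mterm: "mvars (mterm c e) \<subseteq> keys e"
  by (simp add: mvars_def mterm_def)

lemma keys_sum_Var_mult_unique_var:
  assumes "\<mu> \<in> keys (\<Sum>l\<in>L. Var (a l) (b l) * g l)"
    and "\<And>l. l \<in> L \<Longrightarrow> (a l, b l) \<in> V" "\<And>l. l \<in> L \<Longrightarrow> mvars (g l) \<inter> V = {}"
  shows "\<exists>v\<in>V. \<forall>w\<in>V. lookup \<mu> w = (if w = v then 1 else 0)"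
proof -
  obtain l \<nu> where l: "l \<in> L" "\<nu> \<in> keys (g l)" "\<mu> = single (a l, b l) 1 + \<nu>"
    using assms(1) by (rule keys_sum_Var_mult)
  have "lookup \<nu> w = 0" if "w \<in> V" for w
    using keys_subset_mvars[OF l(2)] assms(3)[OF l(1)] that by (auto simp: in_keys_iff)
  then show ?thesis
    using assms(2)[OF l(1)] l(3)
    by (intro bexI[of _ "(a l, b l)"]) (auto simp: lookup_add lookup_single when_def)
qed

section \<open>Permutation monomials\<close>

definition perm_monomial :: "nat set \<Rightarrow> (nat \<Rightarrow> nat) \<Rightarrow> (nat \<times> nat) \<Rightarrow>\<^sub>0 nat" where
  "perm_monomial S \<sigma> = (\<Sum>a\<in>S. single (a, \<sigma> a) 1)"

lemma lookup_perm_monomial: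
  assumes "finite S"
  shows "lookup (perm_monomial S \<sigma>) (a, b) = (if a \<in> S \<and> \<sigma> a = b then 1 else 0)"
proof -
  have "lookup (perm_monomial S \<sigma>) (a, b) = (\<Sum>x\<in>S. if x = a then (if \<sigma> a = b then 1 else 0) else 0)"
    unfolding perm_monomial_def lookup_sum lookup_single by (rule sum.cong) (auto simp: when_def)
  then show ?thesis using assms by simp
qed

lemma perm_monomial_cong: "(\<And>a. a \<in> S \<Longrightarrow> \<sigma> a = \<tau> a) \<Longrightarrow> perm_monomial S \<sigma> = perm_monomial S \<tau>"
  unfolding perm_monomial_def by (rule sum.cong) simp_all

lemma perm_monomial_eqD:
  assumes "finite S" "perm_monomial S \<sigma> = perm_monomial S \<tau>" "a \<in> S"
  shows "\<sigma> a = \<tau> a"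
  using arg_cong[OF assms(2), of "\<lambda>\<mu>. lookup \<mu> (a, \<sigma> a)"] assms(1,3)
  by (simp add: lookup_perm_monomial split: if_splits)

lemma perm_monomial_Diff:
  "finite S \<Longrightarrow> R \<subseteq> S \<Longrightarrow> perm_monomial S \<sigma> = perm_monomial (S - R) \<sigma> + perm_monomial R \<sigma>"
  unfolding perm_monomial_def by (rule sum.subset_diff)

lemma perm_monomial_remove:
  "finite S \<Longrightarrow> i \<in> S \<Longrightarrow> perm_monomial S \<sigma> = single (i, \<sigma> i) 1 + perm_monomial (S - {i}) \<sigma>"
  unfolding perm_monomial_def by (rule sum.remove)

lemma ex_perm_monomial:
  assumes keys: "keys \<mu> \<subseteq> {..<m} \<times> {..<m}"
    and row: "\<And>i. i < m \<Longrightarrow> \<exists>j. \<forall>b. lookup \<mu> (i, b) = (if b = j then 1 else 0)"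
    and col: "\<And>j. j < m \<Longrightarrow> \<exists>i. \<forall>a. lookup \<mu> (a, j) = (if a = i then 1 else 0)"
  shows "\<exists>\<sigma>. \<sigma> permutes {..<m} \<and> \<mu> = perm_monomial {..<m} \<sigma>"
proof -
  obtain \<tau> where \<tau>: "\<And>i b. i < m \<Longrightarrow> lookup \<mu> (i, b) = (if b = \<tau> i then 1 else 0)"
    using row by metis
  define \<sigma> where "\<sigma> i = (if i < m then \<tau> i else i)" for i
  have \<sigma>_lt: "\<sigma> i < m" if "i < m" for i
  proof -
    have "(i, \<tau> i) \<in> keys \<mu>" using \<tau>[OF that, of "\<tau> i"] by (simp add: in_keys_iff)
    then show ?thesis using keys that by (auto simp: \<sigma>_def)
  qed
  have "inj_on \<sigma> {..<m}"
  proof (rule inj_onI)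
    fix i i' assume i: "i \<in> {..<m}" "i' \<in> {..<m}" "\<sigma> i = \<sigma> i'"
    obtain i0 where "\<forall>a. lookup \<mu> (a, \<sigma> i) = (if a = i0 then 1 else 0)"
      using col \<sigma>_lt i(1) by blast
    moreover have "lookup \<mu> (i, \<sigma> i) = 1" "lookup \<mu> (i', \<sigma> i) = 1"
      using \<tau> i by (simp_all add: \<sigma>_def)
    ultimately show "i = i'" by (metis one_neq_zero)
  qed
  moreover have "\<sigma> ` {..<m} = {..<m}"
    using endo_inj_surj[OF _ _ \<open>inj_on \<sigma> {..<m}\<close>] \<sigma>_lt by auto
  ultimately have "\<sigma> permutes {..<m}"
    by (intro bij_imp_permutes) (auto simp: bij_betw_def \<sigma>_def)
  moreover have "\<mu> = perm_monomial {..<m} \<sigma>"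
  proof (rule poly_mapping_eqI)
    fix v :: "nat \<times> nat"
    obtain a b where v: "v = (a, b)" by fastforce
    show "lookup \<mu> v = lookup (perm_monomial {..<m} \<sigma>) v"
      using \<tau>[of a b] keys by (cases "a < m") (auto simp: v lookup_perm_monomial \<sigma>_def in_keys_iff)
  qed
  ultimately show ?thesis by blast
qed

section \<open>Monomials of minors\<close>

definition minor_monomial :: "nat list \<Rightarrow> nat list \<Rightarrow> (nat \<Rightarrow> nat) \<Rightarrow> nat \<Rightarrow> (nat \<times> nat) \<Rightarrow>\<^sub>0 nat" where
  "minor_monomial rs cs p k = (\<Sum>l<k. single (rs ! l, cs ! p l) 1)"

lemma prod_Var:
  "(\<Prod>l\<in>A. Var (a l) (b l) :: 'a::comm_ring_1 mpoly) = single (\<Sum>l\<in>A. single (a l, b l) 1) 1"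
  by (induction A rule: infinite_finite_induct) (simp_all add: Var_def mult_single)

lemma lookup_minor_poly:
  "lookup (minor_poly R C :: 'a::comm_ring_1 mpoly) \<nu> =
    (\<Sum>p | p permutes {..<card R}.
       of_int (sign p) when minor_monomial (sorted_list_of_set R) (sorted_list_of_set C) p (card R) = \<nu>)"
proof -
  have "of_int s * single \<mu> 1 = (single \<mu> (of_int s) :: 'a mpoly)" for s \<mu>
    by (simp only: single_of_int[symmetric] mult_single add_0 mult_1_right)
  then have "lookup (of_int s * single \<mu> 1 :: 'a mpoly) \<nu> = (of_int s when \<mu> = \<nu>)" for s \<mu>
    by (simp add: lookup_single)
  then show ?thesis
    unfolding minor_poly_def Let_def prod_Var lookup_sum minor_monomial_def by simp
qed

lemma lookup_minor_monomial:
  assumes "distinct rs" "k \<le> length rs" "q < k"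
  shows "lookup (minor_monomial rs cs p k) (rs ! q, b) = (if cs ! p q = b then 1 else 0)"
proof -
  have "lookup (minor_monomial rs cs p k) (rs ! q, b) = (\<Sum>l<k. if l = q then (if cs ! p q = b then 1 else 0) else 0)"
    unfolding minor_monomial_def lookup_sum lookup_single
    using assms by (intro sum.cong) (auto simp: when_def nth_eq_iff_index_eq)
  then show ?thesis using assms by simp
qed

lemma minor_monomial_eq_perm_monomial:
  assumes "distinct rs" "length rs = k" "\<And>q. q < k \<Longrightarrow> \<tau> (rs ! q) = cs ! p q"
  shows "minor_monomial rs cs p k = perm_monomial (set rs) \<tau>"
proof -
  have "set rs = (!) rs ` {..<k}" using assms(2) by (auto simp: in_set_conv_nth)
  moreover have "inj_on ((!) rs) {..<k}" using assms(1,2) by (auto simp: inj_on_def nth_eq_iff_index_eq)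
  ultimately show ?thesis
    unfolding minor_monomial_def perm_monomial_def using assms(3) by (simp add: sum.reindex)
qed

lemma perm_monomial_eq_minor_monomialD:
  assumes "perm_monomial (set rs) \<tau> = minor_monomial rs cs p k" "distinct rs" "length rs = k" "q < k"
  shows "\<tau> (rs ! q) = cs ! p q"
  using arg_cong[OF assms(1), of "\<lambda>\<mu>. lookup \<mu> (rs ! q, \<tau> (rs ! q))"] assms(2-4)
  by (simp add: lookup_perm_monomial lookup_minor_monomial split: if_splits)

lemma minor_monomial_inj:
  assumes "distinct rs" "k \<le> length rs" "distinct cs" "k \<le> length cs"
    and "p permutes {..<k}" "p' permutes {..<k}" "minor_monomial rs cs p k = minor_monomial rs cs p' k"
  shows "p = p'"
proof
  fix q
  show "p q = p' q"
  proof (cases "q < k")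
    case True
    have "cs ! p' q = cs ! p q"
      using arg_cong[OF assms(7), of "\<lambda>\<mu>. lookup \<mu> (rs ! q, cs ! p q)"] assms(1,2) True
      by (simp add: lookup_minor_monomial split: if_splits)
    moreover have "p q < k" "p' q < k"
      using permutes_in_image[OF assms(5)] permutes_in_image[OF assms(6)] True by auto
    ultimately show ?thesis using assms(3,4) by (simp add: nth_eq_iff_index_eq)
  qed (use assms(5,6) in \<open>simp add: permutes_not_in\<close>)
qed

lemma lookup_minor_poly_minor_monomial:
  assumes "finite R" "finite C" "card C = card R" "p permutes {..<card R}"
  shows "lookup (minor_poly R C :: 'a::comm_ring_1 mpoly)
      (minor_monomial (sorted_list_of_set R) (sorted_list_of_set C) p (card R)) = of_int (sign p)"
proof -
  let ?mm = "minor_monomial (sorted_list_of_set R) (sorted_list_of_set C)"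
  have "q = p" if "q permutes {..<card R}" "?mm q (card R) = ?mm p (card R)" for q
    using minor_monomial_inj[OF _ _ _ _ that(1) assms(4) that(2)] assms(1-3) by simp
  then have "(\<Sum>q | q permutes {..<card R}. (of_int (sign q) :: 'a) when ?mm q (card R) = ?mm p (card R))
      = (\<Sum>q | q permutes {..<card R}. of_int (sign q) when q = p)"
    by (intro sum.cong when_cong) auto
  then show ?thesis
    using assms(4) by (simp add: lookup_minor_poly when_def finite_permutations)
qed

lemma keys_minor_poly:
  assumes "\<nu> \<in> keys (minor_poly R C :: 'a::comm_ring_1 mpoly)"
  obtains p where "p permutes {..<card R}"
    "\<nu> = minor_monomial (sorted_list_of_set R) (sorted_list_of_set C) p (card R)"
proof -
  have "(\<Sum>p | p permutes {..<card R}. (of_int (sign p) :: 'a) when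
      minor_monomial (sorted_list_of_set R) (sorted_list_of_set C) p (card R) = \<nu>) \<noteq> 0"
    using assms by (simp add: in_keys_iff lookup_minor_poly)
  then show thesis
    using that by (auto elim: sum.not_neutral_contains_not_neutral)
qed

lemma keys_minor_poly_perm_monomial:
  assumes "finite R" "\<nu> \<in> keys (minor_poly R C :: 'a::comm_ring_1 mpoly)"
  obtains \<tau> where "\<nu> = perm_monomial R \<tau>"
proof -
  define rs cs where "rs = sorted_list_of_set R" and "cs = sorted_list_of_set C"
  obtain p where p: "\<nu> = minor_monomial rs cs p (card R)"
    using keys_minor_poly[OF assms(2)] rs_def cs_def by metis
  have rs: "distinct rs" "length rs = card R" "set rs = R" using assms(1) by (simp_all add: rs_def)
  let ?\<tau> = "\<lambda>a. cs ! p (inv_into {..<card R} ((!) rs) a)"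
  have "inj_on ((!) rs) {..<card R}" using rs by (auto simp: inj_on_def nth_eq_iff_index_eq)
  then have "\<nu> = perm_monomial R ?\<tau>"
    using minor_monomial_eq_perm_monomial[OF rs(1,2), of ?\<tau> cs p] p rs(3) by simp
  then show thesis by (rule that)
qed

lemma mvars_minor_poly:
  assumes "finite R" "finite C" "card C = card R"
  shows "mvars (minor_poly R C :: 'a::comm_ring_1 mpoly) \<subseteq> R \<times> C"
proof
  fix v assume "v \<in> mvars (minor_poly R C :: 'a mpoly)"
  then obtain \<nu> where \<nu>: "\<nu> \<in> keys (minor_poly R C :: 'a mpoly)" "v \<in> keys \<nu>"
    by (auto simp: mvars_def)
  obtain p where p: "p permutes {..<card R}"
    "\<nu> = minor_monomial (sorted_list_of_set R) (sorted_list_of_set C) p (card R)"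
    using keys_minor_poly[OF \<nu>(1)] by metis
  have "keys \<nu> \<subseteq> (\<Union>l<card R. keys (single (sorted_list_of_set R ! l, sorted_list_of_set C ! p l) (1::nat)))"
    unfolding p(2) minor_monomial_def by (rule keys_sum)
  then obtain l where "l < card R" "v = (sorted_list_of_set R ! l, sorted_list_of_set C ! p l)"
    using \<nu>(2) by auto
  moreover have "p l < card R" using permutes_in_image[OF p(1)] \<open>l < card R\<close> by simp
  ultimately show "v \<in> R \<times> C"
    using assms by (metis SigmaI length_sorted_list_of_set nth_mem set_sorted_list_of_set)
qed

lemma lookup_minor_poly_swap_rows:
  assumes "finite R" "finite C" "card C = card R" "k \<in> R" "l \<in> R" "k \<noteq> l"
    and key: "perm_monomial R \<tau> \<in> keys (minor_poly R C :: 'a::comm_ring_1 mpoly)"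
  shows "lookup (minor_poly R C :: 'a mpoly) (perm_monomial R (\<tau> \<circ> transpose k l)) =
    - lookup (minor_poly R C) (perm_monomial R \<tau>)"
proof -
  define rs cs where "rs = sorted_list_of_set R" and "cs = sorted_list_of_set C"
  have rs: "distinct rs" "length rs = card R" "set rs = R" using assms(1) by (simp_all add: rs_def)
  obtain p where p: "p permutes {..<card R}" "perm_monomial R \<tau> = minor_monomial rs cs p (card R)"
    using keys_minor_poly[OF key] rs_def cs_def by metis
  obtain k' l' where kl': "k' < card R" "l' < card R" "rs ! k' = k" "rs ! l' = l"
    using rs assms(4,5) by (metis in_set_conv_nth)
  have "k' \<noteq> l'" using kl' assms(6) by auto
  have p2: "perm_monomial (set rs) \<tau> = minor_monomial rs cs p (length rs)" using p(2) rs by simp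
  let ?p' = "p \<circ> transpose k' l'"
  have p': "?p' permutes {..<card R}" using p(1) kl' by (simp add: permutes_compose permutes_swap_id)
  have "perm_monomial R (\<tau> \<circ> transpose k l) = minor_monomial rs cs ?p' (card R)"
  proof -
    have "transpose k l (rs ! q) = rs ! transpose k' l' q" if "q < card R" for q
      using that kl' rs by (auto simp: transpose_def nth_eq_iff_index_eq)
    moreover have "transpose k' l' q < card R" if "q < card R" for q
      using that kl' by (auto simp: transpose_def)
    ultimately have "minor_monomial rs cs ?p' (card R) = perm_monomial (set rs) (\<tau> \<circ> transpose k l)"
      using perm_monomial_eq_minor_monomialD[OF p2 rs(1)] rs
      by (intro minor_monomial_eq_perm_monomial) auto
    then show ?thesis using rs(3) by simp
  qed
  moreover have "sign ?p' = - sign p"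
    using sign_compose[OF permutes_imp_permutation[OF _ p(1)] permutation_swap_id] \<open>k' \<noteq> l'\<close>
    by (simp add: sign_swap_id)
  moreover have "lookup (minor_poly R C :: 'a mpoly) (minor_monomial rs cs q (card R)) = of_int (sign q)"
    if "q permutes {..<card R}" for q
    unfolding rs_def cs_def using assms(1-3) that by (rule lookup_minor_poly_minor_monomial)
  ultimately show ?thesis using p p' by simp
qed

lemma minor_monomial_upt:
  "p permutes {..<m} \<Longrightarrow> minor_monomial [0..<m] [0..<m] p m = perm_monomial {..<m} p"
  using minor_monomial_eq_perm_monomial[of "[0..<m]" m p "[0..<m]" p]
  by (simp add: permutes_in_image lessThan_atLeast0)

lemma lookup_det_poly:
  assumes "\<sigma> permutes {..<m}"
  shows "lookup (minor_poly {..<m} {..<m} :: 'a::comm_ring_1 mpoly) (perm_monomial {..<m} \<sigma>) =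
    of_int (sign \<sigma>)"
  using lookup_minor_poly_minor_monomial[of "{..<m}" "{..<m}" \<sigma>] assms
  by (simp add: minor_monomial_upt lessThan_atLeast0)

lemma keys_det_poly:
  assumes "\<nu> \<in> keys (minor_poly {..<m} {..<m} :: 'a::comm_ring_1 mpoly)"
  obtains \<sigma> where "\<sigma> permutes {..<m}" "\<nu> = perm_monomial {..<m} \<sigma>"
proof -
  obtain p where "p permutes {..<m}" "\<nu> = minor_monomial [0..<m] [0..<m] p m"
    using keys_minor_poly[OF assms] by (auto simp: lessThan_atLeast0)
  then show thesis using that minor_monomial_upt by simp
qed

lemma mvars_scalar_mono_minor:
  fixes g :: "'a::comm_ring_1 mpoly"
  assumes "scalar_mono_minor Rz Cz r g" "finite Rz" "finite Cz"
  shows "mvars g \<subseteq> Rz \<times> Cz"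
proof -
  obtain c e R C where *: "keys e \<subseteq> Rz \<times> Cz" "R \<subseteq> Rz" "C \<subseteq> Cz" "card R = r" "card C = r"
    "g = mterm c e * minor_poly R C"
    using assms(1) unfolding scalar_mono_minor_def by blast
  have "finite R" "finite C" using * assms finite_subset by auto
  then have "mvars (minor_poly R C :: 'a mpoly) \<subseteq> R \<times> C" using * by (intro mvars_minor_poly) simp_all
  then show ?thesis using mvars_mult[of "mterm c e" "minor_poly R C"] mvars_mterm[of c e] * by blast
qed

lemma keys_mterm_mult_minor_poly:
  fixes c :: "'a::comm_ring_1"
  assumes "finite S" "R \<subseteq> S" "perm_monomial S \<sigma> \<in> keys (mterm c e * minor_poly R C)"
  shows "e = perm_monomial (S - R) \<sigma>" "perm_monomial R \<sigma> \<in> keys (minor_poly R C :: 'a mpoly)"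
proof -
  have R: "finite R" using assms(1,2) finite_subset by blast
  obtain \<nu> where \<nu>: "\<nu> \<in> keys (minor_poly R C :: 'a mpoly)" "perm_monomial S \<sigma> = e + \<nu>"
    using assms(3) unfolding mterm_def by (rule keys_single_mult)
  obtain \<tau> where \<tau>: "\<nu> = perm_monomial R \<tau>" using keys_minor_poly_perm_monomial[OF R \<nu>(1)] .
  have "\<tau> a = \<sigma> a" if "a \<in> R" for a
    using arg_cong[OF \<nu>(2), of "\<lambda>\<mu>. lookup \<mu> (a, \<tau> a)"] that R assms(1)
    by (simp add: lookup_add \<tau> lookup_perm_monomial split: if_splits)
  then have "\<nu> = perm_monomial R \<sigma>" unfolding \<tau> by (rule perm_monomial_cong)
  moreover have "perm_monomial S \<sigma> = perm_monomial (S - R) \<sigma> + perm_monomial R \<sigma>"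
    using assms(1,2) by (rule perm_monomial_Diff)
  ultimately show "e = perm_monomial (S - R) \<sigma>" "perm_monomial R \<sigma> \<in> keys (minor_poly R C :: 'a mpoly)"
    using \<nu> by simp_all
qed

lemma mterm_mult_minor_poly_agree_off_rows:
  fixes c :: "'a::comm_ring_1"
  assumes "finite S" "R \<subseteq> S"
    and "perm_monomial S \<sigma> \<in> keys (mterm c e * minor_poly R C)"
    and "perm_monomial S \<tau> \<in> keys (mterm c e * minor_poly R C)"
    and "a \<in> S - R"
  shows "\<sigma> a = \<tau> a"
proof -
  have "perm_monomial (S - R) \<sigma> = perm_monomial (S - R) \<tau>"
    using keys_mterm_mult_minor_poly(1)[OF assms(1,2)] assms(3,4) by metis
  moreover have "finite (S - R)" using assms(1) by simp
  ultimately show ?thesis using assms(5) by (intro perm_monomial_eqD[of "S - R"])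
qed

lemma lookup_mterm_mult_minor_poly_swap_rows:
  fixes c :: "'a::comm_ring_1"
  assumes "finite S" "R \<subseteq> S" "finite C" "card C = card R" "k \<in> R" "l \<in> R" "k \<noteq> l"
    and key: "perm_monomial S \<sigma> \<in> keys (mterm c e * minor_poly R C)"
  shows "lookup (mterm c e * minor_poly R C) (perm_monomial S (\<sigma> \<circ> transpose k l)) =
    - lookup (mterm c e * minor_poly R C) (perm_monomial S \<sigma>)"
proof -
  have fin: "finite R" using assms(1,2) finite_subset by blast
  have lookup_R: "lookup (mterm c e * minor_poly R C) (perm_monomial S \<tau>) =
      c * lookup (minor_poly R C) (perm_monomial R \<tau>)" if "\<And>a. a \<in> S - R \<Longrightarrow> \<tau> a = \<sigma> a" for \<tau>
  proof -
    have "perm_monomial S \<tau> = perm_monomial (S - R) \<tau> + perm_monomial R \<tau>"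
      using assms(1,2) by (rule perm_monomial_Diff)
    also have "perm_monomial (S - R) \<tau> = perm_monomial (S - R) \<sigma>"
      using that by (rule perm_monomial_cong)
    also have "\<dots> = e"
      using keys_mterm_mult_minor_poly(1)[OF assms(1,2) key] by simp
    finally show ?thesis by (simp add: mterm_def lookup_single_mult)
  qed
  have "(\<sigma> \<circ> transpose k l) a = \<sigma> a" if "a \<in> S - R" for a
    using that assms(5,6) by (auto simp: transpose_def)
  then have "lookup (mterm c e * minor_poly R C) (perm_monomial S (\<sigma> \<circ> transpose k l)) =
      c * lookup (minor_poly R C) (perm_monomial R (\<sigma> \<circ> transpose k l))"
    by (rule lookup_R)
  moreover have "lookup (mterm c e * minor_poly R C) (perm_monomial S \<sigma>) =
      c * lookup (minor_poly R C) (perm_monomial R \<sigma>)"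
    by (rule lookup_R) (rule refl)
  ultimately show ?thesis
    using lookup_minor_poly_swap_rows[OF fin assms(3-7) keys_mterm_mult_minor_poly(2)[OF assms(1,2) key]]
    by simp
qed

section \<open>Blocks of rows\<close>

text \<open>In the application, B i is the row set of the minor in the expansion of f along row i
  and P \<sigma> says that the permutation monomial of \<sigma> occurs in f.\<close>

locale swap_blocks =
  fixes m r :: nat and \<sigma>0 :: "nat \<Rightarrow> nat" and B :: "nat \<Rightarrow> nat set" and P :: "(nat \<Rightarrow> nat) \<Rightarrow> bool"
  assumes three_le_r: "3 \<le> r" and inj: "inj_on \<sigma>0 {..<m}"
    and block_subset: "\<And>i. i < m \<Longrightarrow> B i \<subseteq> {..<m} - {i}"
    and card_block: "\<And>i. i < m \<Longrightarrow> card (B i) = r"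
    and swap: "\<And>i k l. i < m \<Longrightarrow> k \<in> B i \<Longrightarrow> l \<in> B i \<Longrightarrow> k \<noteq> l \<Longrightarrow> P (\<sigma>0 \<circ> transpose k l)"
    and rigid: "\<And>i \<sigma> a. i < m \<Longrightarrow> P \<sigma> \<Longrightarrow> \<sigma> i = \<sigma>0 i \<Longrightarrow> a \<in> {..<m} - {i} - B i \<Longrightarrow> \<sigma> a = \<sigma>0 a"
begin

lemma finite_block: "i < m \<Longrightarrow> finite (B i)"
  using block_subset finite_subset by blast

lemma transpose_moves: "k < m \<Longrightarrow> l < m \<Longrightarrow> k \<noteq> l \<Longrightarrow> (\<sigma>0 \<circ> transpose k l) k \<noteq> \<sigma>0 k"
  using inj_onD[OF inj, of l k] by auto

lemma block_Diff_subset: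
  assumes "i < m" "j < m"
  shows "B j - {i} \<subseteq> B i"
proof
  fix x assume x: "x \<in> B j - {i}"
  have "card {x, i} \<le> 2" by (simp add: card_insert_le_m1)
  then have "\<not> B j \<subseteq> {x, i}" using card_mono[of "{x, i}" "B j"] card_block[OF assms(2)] three_le_r by auto
  then obtain y where y: "y \<in> B j" "y \<noteq> x" "y \<noteq> i" by blast
  have "x < m" "y < m" using block_subset[OF assms(2)] x y by auto
  have "P (\<sigma>0 \<circ> transpose x y)" using swap[OF assms(2)] x y by auto
  moreover have "(\<sigma>0 \<circ> transpose x y) i = \<sigma>0 i" using x y by auto
  moreover have "(\<sigma>0 \<circ> transpose x y) x \<noteq> \<sigma>0 x" using transpose_moves \<open>x < m\<close> \<open>y < m\<close> y by auto
  ultimately show "x \<in> B i" using rigid[OF assms(1), of "\<sigma>0 \<circ> transpose x y" x] x \<open>x < m\<close> by auto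
qed

text \<open>Let R be the block of row 0 and i \<in> R.  The block of i contains R - {i} and hence one
  element t \<notin> R.  A row i' \<notin> R with i' \<noteq> t exists when m \<ge> r + 2, and its block is R; the swap
  of t with some k \<in> R - {i} is allowed by row i but moves t, which row i' forbids.\<close>

lemma card_le: "m \<le> r + 1"
proof (rule ccontr)
  assume "\<not> m \<le> r + 1"
  then have m: "0 < m" "r + 2 \<le> m" by auto
  define R where "R = B 0"
  have R: "R \<subseteq> {..<m}" "card R = r" "finite R"
    using block_subset[OF m(1)] card_block[OF m(1)] finite_block[OF m(1)] by (auto simp: R_def)
  have "R \<noteq> {}" using R(2) three_le_r by auto
  then obtain i where i: "i \<in> R" by blast
  have "card (R - {i}) \<noteq> 0" using R(2,3) i three_le_r by simp
  then obtain k where k: "k \<in> R" "k \<noteq> i" by (metis DiffE card.empty ex_in_conv singletonI)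
  have i_lt: "i < m" and k_lt: "k < m" using R(1) i k by auto
  have "\<not> B i \<subseteq> R"
  proof
    assume "B i \<subseteq> R"
    then have "B i \<subseteq> R - {i}" using block_subset[OF i_lt] by blast
    then have "card (B i) \<le> card (R - {i})" using R(3) by (intro card_mono) simp_all
    then show False using card_block[OF i_lt] R(2,3) i three_le_r by simp
  qed
  then obtain t where t: "t \<in> B i" "t \<notin> R" by blast
  have t_lt: "t < m" using block_subset[OF i_lt] t(1) by blast
  have "\<not> {..<m} - R \<subseteq> {t}"
  proof
    assume "{..<m} - R \<subseteq> {t}"
    then have "card ({..<m} - R) \<le> 1" using card_mono[of "{t}"] by fastforce
    then show False using card_Diff_subset[OF R(3,1)] R(2) m(2) by simp
  qed
  then obtain i' where i': "i' < m" "i' \<notin> R" "i' \<noteq> t" by blast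
  have "R \<subseteq> B i'" using block_Diff_subset[OF i'(1) m(1)] i'(2) by (auto simp: R_def)
  then have "R = B i'" using R(2) card_block[OF i'(1)] finite_block[OF i'(1)] by (intro card_subset_eq) simp_all
  have "P (\<sigma>0 \<circ> transpose t k)"
    using swap[OF i_lt t(1)] block_Diff_subset[OF i_lt m(1)] k t(2) by (auto simp: R_def)
  moreover have "(\<sigma>0 \<circ> transpose t k) i' = \<sigma>0 i'" using i' k by (auto simp: transpose_def)
  moreover have "t \<in> {..<m} - {i'} - B i'" using t_lt t(2) i'(3) \<open>R = B i'\<close> by auto
  ultimately have "(\<sigma>0 \<circ> transpose t k) t = \<sigma>0 t" by (rule rigid[OF i'(1)])
  then show False using transpose_moves[OF t_lt k_lt] k(1) t(2) by auto
qed

end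

section \<open>Row and column expansions\<close>

definition row_expansion ::
  "'a::comm_ring_1 mpoly \<Rightarrow> nat \<Rightarrow> nat \<Rightarrow> nat \<Rightarrow> (nat \<Rightarrow> nat) \<Rightarrow> (nat \<Rightarrow> 'a mpoly) \<Rightarrow> bool" where
  "row_expansion f m r i js fs \<longleftrightarrow>
     strict_mono_on {..<r+1} js \<and> js ` {..<r+1} \<subseteq> {..<m} \<and>
     f = (\<Sum>l<r+1. Var i (js l) * fs l) \<and>
     (\<forall>l<r+1. scalar_mono_minor ({..<m} - {i}) ({..<m} - {js l}) r (fs l))"

definition col_expansion ::
  "'a::comm_ring_1 mpoly \<Rightarrow> nat \<Rightarrow> nat \<Rightarrow> nat \<Rightarrow> (nat \<Rightarrow> nat) \<Rightarrow> (nat \<Rightarrow> 'a mpoly) \<Rightarrow> bool" where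
  "col_expansion f m r j is gs \<longleftrightarrow>
     strict_mono_on {..<r+1} is \<and> is ` {..<r+1} \<subseteq> {..<m} \<and>
     f = (\<Sum>l<r+1. Var (is l) j * gs l) \<and>
     (\<forall>l<r+1. scalar_mono_minor ({..<m} - {is l}) ({..<m} - {j}) r (gs l))"

lemma row_expansion_length: "row_expansion f m r i js fs \<Longrightarrow> r + 1 \<le> m"
  using card_inj_on_le[of js "{..<r+1}" "{..<m}"]
  by (simp add: row_expansion_def strict_mono_on_imp_inj_on)

lemma row_expansion_unique_in_row:
  assumes "row_expansion f m r i js fs" "\<mu> \<in> keys f"
  shows "\<exists>j. \<forall>b. lookup \<mu> (i, b) = (if b = j then 1 else 0)"
proof -
  from assms(1) have f: "f = (\<Sum>l<r+1. Var i (js l) * fs l)"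
    and smm: "\<forall>l<r+1. scalar_mono_minor ({..<m} - {i}) ({..<m} - {js l}) r (fs l)"
    unfolding row_expansion_def by blast+
  have disj: "mvars (fs l) \<inter> {i} \<times> UNIV = {}" if "l \<in> {..<r+1}" for l
    using mvars_scalar_mono_minor[OF smm[rule_format, of l]] that by auto
  have "\<exists>v\<in>{i} \<times> UNIV. \<forall>w\<in>{i} \<times> UNIV. lookup \<mu> w = (if w = v then 1 else 0)"
    by (rule keys_sum_Var_mult_unique_var[OF assms(2)[unfolded f]]) (use disj in auto)
  then show ?thesis by force
qed

lemma col_expansion_unique_in_col:
  assumes "col_expansion f m r j is gs" "\<mu> \<in> keys f"
  shows "\<exists>i. \<forall>a. lookup \<mu> (a, j) = (if a = i then 1 else 0)"
proof -
  from assms(1) have f: "f = (\<Sum>l<r+1. Var (is l) j * gs l)"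
    and smm: "\<forall>l<r+1. scalar_mono_minor ({..<m} - {is l}) ({..<m} - {j}) r (gs l)"
    unfolding col_expansion_def by blast+
  have disj: "mvars (gs l) \<inter> UNIV \<times> {j} = {}" if "l \<in> {..<r+1}" for l
    using mvars_scalar_mono_minor[OF smm[rule_format, of l]] that by auto
  have "\<exists>v\<in>UNIV \<times> {j}. \<forall>w\<in>UNIV \<times> {j}. lookup \<mu> w = (if w = v then 1 else 0)"
    by (rule keys_sum_Var_mult_unique_var[OF assms(2)[unfolded f]]) (use disj in auto)
  then show ?thesis by force
qed

lemma expansions_keys_perm_monomial:
  assumes "mvars f \<subseteq> {..<m} \<times> {..<m}"
    and rows: "\<forall>i<m. \<exists>js fs. row_expansion f m r i js fs"
    and cols: "\<forall>j<m. \<exists>is gs. col_expansion f m r j is gs"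
    and \<mu>: "\<mu> \<in> keys f"
  shows "\<exists>\<sigma>. \<sigma> permutes {..<m} \<and> \<mu> = perm_monomial {..<m} \<sigma>"
proof (rule ex_perm_monomial)
  show "keys \<mu> \<subseteq> {..<m} \<times> {..<m}" using keys_subset_mvars[OF \<mu>] assms(1) by blast
  show "\<exists>j. \<forall>b. lookup \<mu> (i, b) = (if b = j then 1 else 0)" if "i < m" for i
    using rows that row_expansion_unique_in_row[OF _ \<mu>] by blast
  show "\<exists>i. \<forall>a. lookup \<mu> (a, j) = (if a = i then 1 else 0)" if "j < m" for j
    using cols that col_expansion_unique_in_col[OF _ \<mu>] by blast
qed

lemma row_expansion_key_index:
  assumes "row_expansion f m r i js fs" "perm_monomial {..<m} \<sigma> \<in> keys f"
  obtains l where "l < r + 1" "js l = \<sigma> i"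
proof -
  have "perm_monomial {..<m} \<sigma> \<in> keys (\<Sum>l<r+1. Var i (js l) * fs l)"
    using assms unfolding row_expansion_def by metis
  then obtain l \<nu> where l: "l \<in> {..<r+1}" "perm_monomial {..<m} \<sigma> = single (i, js l) 1 + \<nu>"
    by (rule keys_sum_Var_mult)
  then have "lookup (perm_monomial {..<m} \<sigma>) (i, js l) \<noteq> 0" by (simp add: lookup_add)
  then show thesis using that l(1) by (auto simp: lookup_perm_monomial split: if_splits)
qed

lemma lookup_row_expansion:
  assumes exp: "row_expansion f m r i js fs" and "i < m" "l0 < r + 1" "\<sigma> i = js l0"
  shows "lookup f (perm_monomial {..<m} \<sigma>) = lookup (fs l0) (perm_monomial ({..<m} - {i}) \<sigma>)"
proof -
  have split: "perm_monomial {..<m} \<sigma> = single (i, js l0) 1 + perm_monomial ({..<m} - {i}) \<sigma>"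
    using perm_monomial_remove[of "{..<m}" i \<sigma>] assms(2,4) by simp
  let ?c = "\<lambda>l. lookup (Var i (js l) * fs l) (perm_monomial {..<m} \<sigma>)"
  have "?c l = 0" if "l \<in> {..<r+1} - {l0}" for l
  proof -
    have "js l \<noteq> js l0"
      using exp that assms(3) strict_mono_on_imp_inj_on by (fastforce simp: row_expansion_def inj_on_def)
    then show ?thesis using assms(4) by (intro lookup_Var_mult_eq_0) (simp add: lookup_perm_monomial)
  qed
  then have "sum ?c {..<r+1} = sum ?c {l0}"
    using assms(3) by (intro sum.mono_neutral_left[symmetric]) auto
  moreover have "f = (\<Sum>l<r+1. Var i (js l) * fs l)"
    using exp unfolding row_expansion_def by blast
  ultimately have "lookup f (perm_monomial {..<m} \<sigma>) = sum ?c {l0}"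
    by (simp only: lookup_sum)
  also have "\<dots> = ?c l0" by simp
  also have "\<dots> = lookup (fs l0) (perm_monomial ({..<m} - {i}) \<sigma>)"
    unfolding split by (rule lookup_Var_mult)
  finally show ?thesis .
qed

lemma row_expansion_block:
  fixes f :: "'a::comm_ring_1 mpoly"
  assumes exp: "row_expansion f m r i js fs" and "i < m"
    and key: "perm_monomial {..<m} \<sigma>0 \<in> keys f"
  obtains R where "R \<subseteq> {..<m} - {i}" "card R = r"
    "\<And>k l. k \<in> R \<Longrightarrow> l \<in> R \<Longrightarrow> k \<noteq> l \<Longrightarrow>
      lookup f (perm_monomial {..<m} (\<sigma>0 \<circ> transpose k l)) = - lookup f (perm_monomial {..<m} \<sigma>0)"
    "\<And>\<sigma> a. perm_monomial {..<m} \<sigma> \<in> keys f \<Longrightarrow> \<sigma> i = \<sigma>0 i \<Longrightarrow> a \<in> {..<m} - {i} - R \<Longrightarrow>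
      \<sigma> a = \<sigma>0 a"
proof -
  let ?S = "{..<m} - {i}"
  obtain l0 where l0: "l0 < r + 1" "js l0 = \<sigma>0 i"
    using exp key by (rule row_expansion_key_index)
  obtain c e R C where R: "R \<subseteq> ?S" "C \<subseteq> {..<m} - {js l0}" "card R = r" "card C = r"
    and fs: "fs l0 = mterm c e * minor_poly R C"
    using exp l0(1) unfolding row_expansion_def scalar_mono_minor_def by blast
  have "finite C" using finite_subset[OF R(2)] by simp
  let ?g = "mterm c e * minor_poly R C"
  have coeff: "lookup f (perm_monomial {..<m} \<sigma>) = lookup ?g (perm_monomial ?S \<sigma>)"
    if "\<sigma> i = \<sigma>0 i" for \<sigma>
    using lookup_row_expansion[OF exp \<open>i < m\<close> l0(1)] that l0(2) fs by simp
  have key_S: "perm_monomial ?S \<sigma> \<in> keys ?g" if "perm_monomial {..<m} \<sigma> \<in> keys f" "\<sigma> i = \<sigma>0 i" for \<sigma>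
    using that coeff by (simp add: in_keys_iff)
  show thesis
  proof (rule that[OF R(1,3)])
    fix k l assume kl: "k \<in> R" "l \<in> R" "k \<noteq> l"
    then have "(\<sigma>0 \<circ> transpose k l) i = \<sigma>0 i" using R(1) by (auto simp: transpose_def)
    then have "lookup f (perm_monomial {..<m} (\<sigma>0 \<circ> transpose k l)) =
        lookup ?g (perm_monomial ?S (\<sigma>0 \<circ> transpose k l))"
      by (rule coeff)
    also have "\<dots> = - lookup ?g (perm_monomial ?S \<sigma>0)"
      using R(3,4) by (intro lookup_mterm_mult_minor_poly_swap_rows kl \<open>finite C\<close> R(1) key_S[OF key refl]) simp_all
    also have "\<dots> = - lookup f (perm_monomial {..<m} \<sigma>0)"
      using coeff[of \<sigma>0] by simp
    finally show "lookup f (perm_monomial {..<m} (\<sigma>0 \<circ> transpose k l)) = - lookup f (perm_monomial {..<m} \<sigma>0)" .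
  next
    fix \<sigma> a assume \<sigma>: "perm_monomial {..<m} \<sigma> \<in> keys f" "\<sigma> i = \<sigma>0 i" and a: "a \<in> ?S - R"
    show "\<sigma> a = \<sigma>0 a"
      by (rule mterm_mult_minor_poly_agree_off_rows[OF _ R(1) key_S[OF \<sigma>] key_S[OF key refl] a]) simp
  qed
qed

lemma row_expansions_square:
  fixes f :: "'a::comm_ring_1 mpoly"
  assumes "r \<ge> 3" and rows: "\<forall>i<m. \<exists>js fs. row_expansion f m r i js fs"
    and "\<sigma>0 permutes {..<m}" "perm_monomial {..<m} \<sigma>0 \<in> keys f"
  shows "m \<le> r + 1"
proof -
  let ?P = "\<lambda>\<sigma>. perm_monomial {..<m} \<sigma> \<in> keys f"
  let ?block = "\<lambda>i R. R \<subseteq> {..<m} - {i} \<and> card R = r \<and>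
      (\<forall>k\<in>R. \<forall>l\<in>R. k \<noteq> l \<longrightarrow> ?P (\<sigma>0 \<circ> transpose k l)) \<and>
      (\<forall>\<sigma> a. ?P \<sigma> \<longrightarrow> \<sigma> i = \<sigma>0 i \<longrightarrow> a \<in> {..<m} - {i} - R \<longrightarrow> \<sigma> a = \<sigma>0 a)"
  have ex: "\<exists>R. ?block i R" if i: "i < m" for i
  proof -
    obtain js fs where exp: "row_expansion f m r i js fs" using rows i by blast
    show ?thesis
    proof (rule row_expansion_block[OF exp i assms(4)])
      fix R assume R: "R \<subseteq> {..<m} - {i}" "card R = r"
        and swap: "\<And>k l. k \<in> R \<Longrightarrow> l \<in> R \<Longrightarrow> k \<noteq> l \<Longrightarrow>
          lookup f (perm_monomial {..<m} (\<sigma>0 \<circ> transpose k l)) = - lookup f (perm_monomial {..<m} \<sigma>0)"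
        and rigid: "\<And>\<sigma> a. ?P \<sigma> \<Longrightarrow> \<sigma> i = \<sigma>0 i \<Longrightarrow> a \<in> {..<m} - {i} - R \<Longrightarrow> \<sigma> a = \<sigma>0 a"
      have "?P (\<sigma>0 \<circ> transpose k l)" if "k \<in> R" "l \<in> R" "k \<noteq> l" for k l
        using swap[OF that] assms(4) by (simp add: in_keys_iff)
      with R rigid show ?thesis by blast
    qed
  qed
  have block: "?block i (SOME R. ?block i R)" if "i < m" for i
    using ex[OF that] by (rule someI_ex)
  define B where "B i = (SOME R. ?block i R)" for i
  have B: "B i \<subseteq> {..<m} - {i}" "card (B i) = r"
    "\<And>k l. k \<in> B i \<Longrightarrow> l \<in> B i \<Longrightarrow> k \<noteq> l \<Longrightarrow> ?P (\<sigma>0 \<circ> transpose k l)"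
    "\<And>\<sigma> a. ?P \<sigma> \<Longrightarrow> \<sigma> i = \<sigma>0 i \<Longrightarrow> a \<in> {..<m} - {i} - B i \<Longrightarrow> \<sigma> a = \<sigma>0 a"
    if "i < m" for i
    using block[OF that] unfolding B_def by blast+
  interpret swap_blocks m r \<sigma>0 B ?P
  proof unfold_locales
    show "3 \<le> r" by (rule assms(1))
    show "inj_on \<sigma>0 {..<m}" using assms(3) by (rule permutes_inj_on)
  qed (fact B)+
  show ?thesis by (rule card_le)
qed

lemma row_expansions_alternating:
  fixes f :: "'a::comm_ring_1 mpoly"
  assumes "m = r + 1" "r \<ge> 2" and rows: "\<forall>i<m. \<exists>js fs. row_expansion f m r i js fs"
    and "k < m" "l < m" "k \<noteq> l"
  shows "lookup f (perm_monomial {..<m} (\<sigma> \<circ> transpose k l)) = - lookup f (perm_monomial {..<m} \<sigma>)"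
proof -
  have "card {k, l} \<le> card {..<m} - 1" using assms(1,2,6) by simp
  then have "\<not> {..<m} \<subseteq> {k, l}" using card_mono[of "{k, l}" "{..<m}"] assms(1,2) by auto
  then obtain i where i: "i < m" "i \<noteq> k" "i \<noteq> l" by blast
  obtain js fs where exp: "row_expansion f m r i js fs" using rows i(1) by blast
  have swap: "lookup f (perm_monomial {..<m} (\<rho> \<circ> transpose k l)) = - lookup f (perm_monomial {..<m} \<rho>)"
    if key: "perm_monomial {..<m} \<rho> \<in> keys f" for \<rho>
  proof -
    obtain R where R: "R \<subseteq> {..<m} - {i}" "card R = r"
      and swap_R: "\<And>k l. k \<in> R \<Longrightarrow> l \<in> R \<Longrightarrow> k \<noteq> l \<Longrightarrow>
        lookup f (perm_monomial {..<m} (\<rho> \<circ> transpose k l)) = - lookup f (perm_monomial {..<m} \<rho>)"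
      using row_expansion_block[OF exp i(1) key] by metis
    have "R = {..<m} - {i}" using R assms(1) i(1) by (intro card_subset_eq) auto
    then show ?thesis using swap_R assms(4-6) i by simp
  qed
  show ?thesis
  proof (cases "perm_monomial {..<m} \<sigma> \<in> keys f")
    case True
    then show ?thesis by (rule swap)
  next
    case False
    have "\<sigma> \<circ> transpose k l \<circ> transpose k l = \<sigma>" by (simp add: comp_assoc)
    then have "perm_monomial {..<m} (\<sigma> \<circ> transpose k l) \<notin> keys f"
      using swap[of "\<sigma> \<circ> transpose k l"] False by (auto simp: in_keys_iff)
    with False show ?thesis by (simp add: in_keys_iff)
  qed
qed

section \<open>Alternating coefficients\<close>

lemma alternating_eq_sign_mult:
  fixes a :: "('b \<Rightarrow> 'b) \<Rightarrow> 'a::ring_1"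
  assumes "finite S"
    and alt: "\<And>\<sigma> k l. \<sigma> permutes S \<Longrightarrow> k \<in> S \<Longrightarrow> l \<in> S \<Longrightarrow> k \<noteq> l \<Longrightarrow> a (\<sigma> \<circ> transpose k l) = - a \<sigma>"
    and "p permutes S"
  shows "a p = of_int (sign p) * a id"
proof -
  have "\<forall>\<sigma>. \<sigma> permutes S \<longrightarrow> a (\<sigma> \<circ> p) = of_int (sign p) * a \<sigma>"
    using assms(3,1)
  proof (induction p rule: permutes_induct)
    case id
    then show ?case by simp
  next
    case (swap k l p)
    have "sign (transpose k l \<circ> p) = - sign p"
      using sign_compose[OF permutation_swap_id permutes_imp_permutation[OF assms(1) swap.hyps(4)]]
        swap.hyps(3) by (simp add: sign_swap_id)
    moreover have "a (\<sigma> \<circ> (transpose k l \<circ> p)) = - (of_int (sign p) * a \<sigma>)" if "\<sigma> permutes S" for \<sigma>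
    proof -
      have "\<sigma> \<circ> transpose k l permutes S"
        using that swap.hyps(1,2) by (simp add: permutes_compose permutes_swap_id)
      then have "a (\<sigma> \<circ> transpose k l \<circ> p) = of_int (sign p) * a (\<sigma> \<circ> transpose k l)"
        using swap.IH by blast
      then have "a (\<sigma> \<circ> (transpose k l \<circ> p)) = of_int (sign p) * a (\<sigma> \<circ> transpose k l)"
        by (simp only: comp_assoc)
      then show ?thesis using alt[OF that swap.hyps(1-3)] by simp
    qed
    ultimately show ?case by (simp add: comp_def)
  qed
  then show ?thesis using permutes_id[of S] by fastforce
qed

lemma eq_const_mult_det_poly:
  fixes f :: "'a::comm_ring_1 mpoly"
  assumes keys: "\<And>\<mu>. \<mu> \<in> keys f \<Longrightarrow> \<exists>\<sigma>. \<sigma> permutes {..<m} \<and> \<mu> = perm_monomial {..<m} \<sigma>"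
    and coeff: "\<And>\<sigma>. \<sigma> permutes {..<m} \<Longrightarrow> lookup f (perm_monomial {..<m} \<sigma>) = of_int (sign \<sigma>) * d"
  shows "f = const_mpoly d * minor_poly {..<m} {..<m}"
proof (rule poly_mapping_eqI)
  fix \<mu>
  have rhs: "lookup (const_mpoly d * minor_poly {..<m} {..<m}) \<mu> = d * lookup (minor_poly {..<m} {..<m}) \<mu>"
    using lookup_single_mult[of 0 d "minor_poly {..<m} {..<m} :: 'a mpoly" \<mu>] by (simp add: const_mpoly_def)
  show "lookup f \<mu> = lookup (const_mpoly d * minor_poly {..<m} {..<m}) \<mu>"
  proof (cases "\<exists>\<sigma>. \<sigma> permutes {..<m} \<and> \<mu> = perm_monomial {..<m} \<sigma>")
    case True
    then obtain \<sigma> where \<sigma>: "\<sigma> permutes {..<m}" "\<mu> = perm_monomial {..<m} \<sigma>" by blast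
    then show ?thesis
      using rhs coeff[OF \<sigma>(1)] lookup_det_poly[OF \<sigma>(1), where 'a = 'a] by (simp add: mult.commute)
  next
    case False
    then have "\<mu> \<notin> keys f" "\<mu> \<notin> keys (minor_poly {..<m} {..<m} :: 'a mpoly)"
      using keys keys_det_poly by blast+
    then show ?thesis using rhs by (simp add: in_keys_iff)
  qed
qed

theorem lemma3p5:
  fixes f :: "'a::alg_closed_field mpoly" and m r :: nat
  assumes "r \<ge> 3" and "m \<ge> 1" and "f \<noteq> 0"
    and "mvars f \<subseteq> {..<m} \<times> {..<m}"
    and "\<And>A :: 'a mat. A \<in> carrier_mat m m \<Longrightarrow> vec_space.rank m A = r \<Longrightarrow>
           eval_mpoly f (\<lambda>i j. A $$ (i, j)) = 0"
    and "\<forall>i<m. \<exists>js :: nat \<Rightarrow> nat. \<exists>fs :: nat \<Rightarrow> 'a mpoly.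
           strict_mono_on {..<r+1} js \<and> js ` {..<r+1} \<subseteq> {..<m} \<and>
           f = (\<Sum>l<r+1. Var i (js l) * fs l) \<and>
           (\<forall>l<r+1. scalar_mono_minor ({..<m} - {i}) ({..<m} - {js l}) r (fs l))"
    and "\<forall>j<m. \<exists>is :: nat \<Rightarrow> nat. \<exists>gs :: nat \<Rightarrow> 'a mpoly.
           strict_mono_on {..<r+1} is \<and> is ` {..<r+1} \<subseteq> {..<m} \<and>
           f = (\<Sum>l<r+1. Var (is l) j * gs l) \<and>
           (\<forall>l<r+1. scalar_mono_minor ({..<m} - {is l}) ({..<m} - {j}) r (gs l))"
  shows "m = r + 1 \<and> (\<exists>c. f = const_mpoly c * minor_poly {..<m} {..<m})"
proof -
  have rows: "\<forall>i<m. \<exists>js fs. row_expansion f m r i js fs"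
    using assms(6) unfolding row_expansion_def .
  have cols: "\<forall>j<m. \<exists>is gs. col_expansion f m r j is gs"
    using assms(7) unfolding col_expansion_def .
  have keys_perm: "\<exists>\<sigma>. \<sigma> permutes {..<m} \<and> \<mu> = perm_monomial {..<m} \<sigma>" if "\<mu> \<in> keys f" for \<mu>
    using assms(4) rows cols that by (rule expansions_keys_perm_monomial)
  obtain \<mu> where "\<mu> \<in> keys f" using assms(3) by fastforce
  then obtain \<sigma>0 where \<sigma>0: "\<sigma>0 permutes {..<m}" "perm_monomial {..<m} \<sigma>0 \<in> keys f"
    using keys_perm by blast
  obtain js fs where "row_expansion f m r 0 js fs" using rows assms(2) by auto
  then have "r + 1 \<le> m" by (rule row_expansion_length)
  moreover have "m \<le> r + 1" using assms(1) rows \<sigma>0 by (rule row_expansions_square)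
  ultimately have m: "m = r + 1" by simp
  let ?d = "lookup f (perm_monomial {..<m} id)"
  have "lookup f (perm_monomial {..<m} (\<sigma> \<circ> transpose k l)) = - lookup f (perm_monomial {..<m} \<sigma>)"
    if "\<sigma> permutes {..<m}" "k \<in> {..<m}" "l \<in> {..<m}" "k \<noteq> l" for \<sigma> k l
    using row_expansions_alternating[OF m _ rows] assms(1) that by simp
  then have coeff: "lookup f (perm_monomial {..<m} \<sigma>) = of_int (sign \<sigma>) * ?d" if "\<sigma> permutes {..<m}" for \<sigma>
    using alternating_eq_sign_mult[where a = "\<lambda>\<sigma>. lookup f (perm_monomial {..<m} \<sigma>)"] that by blast
  have "f = const_mpoly ?d * minor_poly {..<m} {..<m}"
    using keys_perm coeff by (rule eq_const_mult_det_poly)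
  with m show ?thesis by blast
qed

end
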